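(* Let $(X,\mathcal{A})$ be a cross resolvable design with $r$ parallel classes and $b_r$ blocks per parallel class, and let $z\in\{2,\dots,r\}$ be such that $\mu_z$ exists. In the multi-access coded caching scheme described in the context, with distinct demands, at the end of all transmissions of the delivery phase every user $m$ can recover all subfiles of its demanded file $W_{d_m}$ (using the transmissions and the contents of the caches it is connected to).
   Context: A resolvable design $(X,\mathcal{A})$: $X$ a finite set of $v$ points, $\mathcal{A}$ a collection of $b$ blocks each of size $k$, partitioned into $r$ parallel classes, each being a set of $b_r=v/k$ pairwise disjoint blocks with union $X$. $\mu_z$ exists if $|B_1\cap\cdots\cap B_z|$ equals the same nonzero value $\mu_z$ for every choice of blocks from $z$ distinct parallel classes. Users: one user $U_H$ for each set $H$ of $z$ blocks from $z$ distinct parallel classes, connected to the caches of those blocks (one cache per block). Placement: each file $W_i$ ($i\in[N]$) is split into subfiles $W_{i,x}$, $x\in X$; the cache of block $A_j$ stores $W_{i,x}$ for $x\in A_j$ and all $i$. Delivery: user $m$ demands $W_{d_m}$. For each choice of $z$ parallel classes $\mathcal{P}_1,\dots,\mathcal{P}_z$ and each choice of a pair of distinct blocks $\{C_{s,i_s},C_{s,j_s}\}\subseteq\mathcal{P}_s$ for every $s\in[z]$, let $\mathcal{X}$ be the $2^z$ users whose caches consist of one block from each chosen pair; for $m\in\mathcal{X}$ connected to $C_{1,a_1},\dots,C_{z,a_z}$, with $e_s$ the other index of $\{i_s,j_s\}$, put $f_m=C_{1,e_1}\cap\cdots\cap C_{z,e_z}=\{y_{m,1},\dots,y_{m,\mu_z}\}$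 (fixed ordering), and broadcast $\bigoplus_{m\in\mathcal{X}}W_{d_m,y_{m,s}}$ for each $s\in[\mu_z]$. *)

theory Defs
  imports Main "HOL-Library.FuncSet"
begin

text \<open>Blocks are indexed: C j l is the l-th block (l < br) of the j-th parallel class (j < r).\<close>

definition resolvable_design ::
  "'a set \<Rightarrow> (nat \<Rightarrow> nat \<Rightarrow> 'a set) \<Rightarrow> nat \<Rightarrow> nat \<Rightarrow> nat \<Rightarrow> bool" where
  "resolvable_design X C k r br \<longleftrightarrow>
     finite X \<and> X \<noteq> {} \<and> k > 0 \<and> r > 0 \<and>
     (\<forall>j<r. \<forall>l<br. C j l \<subseteq> X \<and> card (C j l) = k) \<and>
     (\<forall>j<r. (\<forall>l<br. \<forall>l'<br. l \<noteq> l' \<longrightarrow> C j l \<inter> C j l' = {}) \<and>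
            (\<Union>l<br. C j l) = X)"

text \<open>mu_z exists and equals mu: every intersection of blocks from z distinct classes
  has cardinality mu > 0.\<close>
definition mu_z_eq ::
  "(nat \<Rightarrow> nat \<Rightarrow> 'a set) \<Rightarrow> nat \<Rightarrow> nat \<Rightarrow> nat \<Rightarrow> nat \<Rightarrow> bool" where
  "mu_z_eq C r br z mu \<longleftrightarrow> mu > 0 \<and>
     (\<forall>S u. S \<subseteq> {..<r} \<and> card S = z \<and> u \<in> (S \<rightarrow>\<^sub>E {..<br}) \<longrightarrow>
        card (\<Inter>j\<in>S. C j (u j)) = mu)"

definition cross_resolvable_design ::
  "'a set \<Rightarrow> (nat \<Rightarrow> nat \<Rightarrow> 'a set) \<Rightarrow> nat \<Rightarrow> nat \<Rightarrow> nat \<Rightarrow> bool" where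
  "cross_resolvable_design X C k r br \<longleftrightarrow> resolvable_design X C k r br \<and>
     (\<exists>z\<in>{2..r}. \<exists>mu. mu_z_eq C r br z mu)"

text \<open>A user is (S, u): the set S of z parallel classes and the choice u j of a block
  in each class j \<in> S.\<close>
definition users :: "nat \<Rightarrow> nat \<Rightarrow> nat \<Rightarrow> (nat set \<times> (nat \<Rightarrow> nat)) set" where
  "users r br z = {(S, u). S \<subseteq> {..<r} \<and> card S = z \<and> u \<in> (S \<rightarrow>\<^sub>E {..<br})}"

text \<open>Points whose subfiles are available in the caches a user is connected to.\<close>
definition cached_points ::
  "(nat \<Rightarrow> nat \<Rightarrow> 'a set) \<Rightarrow> nat set \<times> (nat \<Rightarrow> nat) \<Rightarrow> 'a set" where
  "cached_points C m = (\<Union>j\<in>fst m. C j (snd m j))"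

definition groups ::
  "nat \<Rightarrow> nat \<Rightarrow> nat \<Rightarrow> (nat set \<times> (nat \<Rightarrow> nat) \<times> (nat \<Rightarrow> nat)) set" where
  "groups r br z = {(S, a, b). S \<subseteq> {..<r} \<and> card S = z \<and>
      a \<in> (S \<rightarrow>\<^sub>E {..<br}) \<and> b \<in> (S \<rightarrow>\<^sub>E {..<br}) \<and> (\<forall>j\<in>S. a j \<noteq> b j)}"

definition group_choices :: "nat set \<Rightarrow> (nat \<Rightarrow> nat) \<Rightarrow> (nat \<Rightarrow> nat) \<Rightarrow> (nat \<Rightarrow> nat) set" where
  "group_choices S a b = PiE S (\<lambda>j. {a j, b j})"

definition f_set ::
  "(nat \<Rightarrow> nat \<Rightarrow> 'a set) \<Rightarrow> nat set \<Rightarrow> (nat \<Rightarrow> nat) \<Rightarrow> (nat \<Rightarrow> nat) \<Rightarrow> (nat \<Rightarrow> nat) \<Rightarrow> 'a set" where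
  "f_set C S a b u = (\<Inter>j\<in>S. C j (if u j = a j then b j else a j))"

text \<open>The s-th transmission (0-based s < mu) of a group; ord gives the fixed ordering
  y_{m,1},...,y_{m,mu} of each set f_m; XOR is the group addition.\<close>
definition transmission ::
  "(nat \<Rightarrow> nat \<Rightarrow> 'a set) \<Rightarrow> ('a set \<Rightarrow> 'a list) \<Rightarrow> (nat set \<times> (nat \<Rightarrow> nat) \<Rightarrow> nat)
    \<Rightarrow> (nat \<Rightarrow> 'a \<Rightarrow> 'v::ab_group_add) \<Rightarrow> nat set \<Rightarrow> (nat \<Rightarrow> nat) \<Rightarrow> (nat \<Rightarrow> nat) \<Rightarrow> nat \<Rightarrow> 'v" where
  "transmission C ord d W S a b s =
     (\<Sum>u\<in>group_choices S a b. W (d (S, u)) (ord (f_set C S a b u) ! s))"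

end

theory Submission
  imports Defs
begin

text \<open>
  Let user \<open>(S, u)\<close> want the subfile at a point \<open>x\<close> it does not cache. In every class
  \<open>j \<in> S\<close> the point \<open>x\<close> lies in a block \<open>l j \<noteq> u j\<close>, so in the group with pairs
  \<open>{u j, l j}\<close> the user's own set \<open>f\<^sub>u\<close> contains \<open>x\<close>, say at position \<open>s\<close>.
  Every other user \<open>v\<close> of that group differs from \<open>u\<close> in some class \<open>j\<close>, so \<open>f\<^sub>v\<close>
  lies inside the block \<open>C j (u j)\<close> cached by \<open>(S, u)\<close>. Hence all summands of the
  \<open>s\<close>-th transmission except the wanted one are known to the user and can be cancelled.
\<close>

lemma sum_eq_sum_imp_summand_eq:
  fixes g g' :: "'b \<Rightarrow> 'v::ab_group_add"
  assumes "finite G" "u \<in> G"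
    and "(\<Sum>v\<in>G. g v) = (\<Sum>v\<in>G. g' v)"
    and "\<And>v. v \<in> G - {u} \<Longrightarrow> g v = g' v"
  shows "g u = g' u"
proof -
  have "(\<Sum>v\<in>G - {u}. g v) = (\<Sum>v\<in>G - {u}. g' v)"
    using assms(4) by (rule sum.cong[OF refl])
  then have "g u + (\<Sum>v\<in>G - {u}. g v) = g' u + (\<Sum>v\<in>G - {u}. g v)"
    using assms(3) by (simp add: sum.remove[OF assms(1,2)])
  then show ?thesis by simp
qed

lemma resolvable_design_cover:
  assumes "resolvable_design X C k r br" "j < r" "x \<in> X"
  shows "\<exists>l<br. x \<in> C j l"
proof -
  have "(\<Union>l<br. C j l) = X"
    using assms(1,2) by (simp add: resolvable_design_def)
  then show ?thesis using assms(3) by auto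
qed

lemma finite_group_choices:
  "finite S \<Longrightarrow> finite (group_choices S a b)"
  unfolding group_choices_def by (intro finite_PiE) auto

lemma group_choices_users:
  assumes "(S, a, b) \<in> groups r br z" "v \<in> group_choices S a b"
  shows "(S, v) \<in> users r br z"
  using assms by (auto simp: groups_def group_choices_def users_def PiE_iff)

lemma self_in_group_choices:
  "(S, a, b) \<in> groups r br z \<Longrightarrow> a \<in> group_choices S a b"
  by (auto simp: groups_def group_choices_def PiE_iff)

lemma card_f_set:
  assumes "mu_z_eq C r br z mu" "(S, a, b) \<in> groups r br z"
  shows "card (f_set C S a b v) = mu"
proof -
  let ?w = "\<lambda>j\<in>S. if v j = a j then b j else a j"
  have "?w \<in> S \<rightarrow>\<^sub>E {..<br}" "S \<subseteq> {..<r}" "card S = z"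
    using assms(2) by (auto simp: groups_def PiE_iff)
  then have "card (\<Inter>j\<in>S. C j (?w j)) = mu"
    using assms(1) unfolding mu_z_eq_def by blast
  then show ?thesis by (simp add: f_set_def)
qed

lemma finite_f_set:
  assumes "mu_z_eq C r br z mu" "(S, a, b) \<in> groups r br z"
  shows "finite (f_set C S a b v)"
  using card_f_set[OF assms] assms(1) by (intro card_ge_0_finite) (simp add: mu_z_eq_def)

lemma set_ord_f_set:
  assumes "mu_z_eq C r br z mu" "(S, a, b) \<in> groups r br z"
    and ord: "\<And>A. finite A \<Longrightarrow> distinct (ord A) \<and> set (ord A) = A"
  shows "set (ord (f_set C S a b v)) = f_set C S a b v"
    and "length (ord (f_set C S a b v)) = mu"
  using ord[OF finite_f_set[OF assms(1,2)]] card_f_set[OF assms(1,2)]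
  by (auto simp flip: distinct_card)

lemma f_set_subset_cached_points:
  assumes "u \<in> PiE S A" "v \<in> PiE S B" "v \<noteq> u"
  shows "f_set C S u b v \<subseteq> cached_points C (S, u)"
proof -
  obtain j where "j \<in> S" "v j \<noteq> u j"
    using assms extensionalityI[of v S u] by (blast dest: PiE_iff[THEN iffD1])
  have "f_set C S u b v \<subseteq> C j (if v j = u j then b j else u j)"
    unfolding f_set_def using \<open>j \<in> S\<close> by (rule INT_lower)
  also have "\<dots> = C j (u j)"
    using \<open>v j \<noteq> u j\<close> by simp
  also have "\<dots> \<subseteq> cached_points C (S, u)"
    unfolding cached_points_def using \<open>j \<in> S\<close> by auto
  finally show ?thesis .
qed

lemma complementary_group_exists:
  assumes "resolvable_design X C k r br" "(S, u) \<in> users r br z"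
    and "x \<in> X" "x \<notin> cached_points C (S, u)"
  obtains l where "(S, u, l) \<in> groups r br z" "x \<in> f_set C S u l u"
proof -
  have S: "S \<subseteq> {..<r}" "card S = z" "u \<in> S \<rightarrow>\<^sub>E {..<br}"
    using assms(2) by (auto simp: users_def)
  have "\<forall>j\<in>S. \<exists>l. l < br \<and> x \<in> C j l"
    using resolvable_design_cover[OF assms(1) _ assms(3)] S(1) by blast
  then obtain l0 where l0: "\<forall>j\<in>S. l0 j < br \<and> x \<in> C j (l0 j)"
    by (rule bchoice[THEN exE])
  define l where "l = restrict l0 S"
  have l: "l \<in> S \<rightarrow>\<^sub>E {..<br}" "\<forall>j\<in>S. x \<in> C j (l j)"
    using l0 by (auto simp: l_def)
  have "\<forall>j\<in>S. u j \<noteq> l j"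
    using assms(4) l(2) by (auto simp: cached_points_def)
  then have "(S, u, l) \<in> groups r br z"
    using S l(1) by (simp add: groups_def)
  moreover have "x \<in> f_set C S u l u"
    using l(2) by (simp add: f_set_def)
  ultimately show thesis by (rule that)
qed

lemma group_transmission_decodes:
  fixes W W' :: "nat \<Rightarrow> 'a \<Rightarrow> 'v::ab_group_add"
  assumes mu: "mu_z_eq C r br z mu"
    and ord: "\<And>A. finite A \<Longrightarrow> distinct (ord A) \<and> set (ord A) = A"
    and group: "(S, u, l) \<in> groups r br z" and "s < mu"
    and sent: "transmission C ord d W S u l s = transmission C ord d W' S u l s"
    and cache: "\<And>v y. v \<in> group_choices S u l \<Longrightarrow> y \<in> cached_points C (S, u) \<Longrightarrow>
                  W (d (S, v)) y = W' (d (S, v)) y"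
  shows "W (d (S, u)) (ord (f_set C S u l u) ! s) = W' (d (S, u)) (ord (f_set C S u l u) ! s)"
proof -
  let ?G = "group_choices S u l"
  let ?y = "\<lambda>v. ord (f_set C S u l v) ! s"
  have classes: "S \<subseteq> {..<r}" and u: "u \<in> S \<rightarrow>\<^sub>E {..<br}"
    using group by (auto simp: groups_def)
  from classes have "finite S"
    by (rule finite_subset) simp
  have y_in_f_set: "?y v \<in> f_set C S u l v" for v
    using nth_mem[of s "ord (f_set C S u l v)"] set_ord_f_set[OF mu group ord] \<open>s < mu\<close>
    by simp
  then have "W (d (S, v)) (?y v) = W' (d (S, v)) (?y v)" if "v \<in> ?G - {u}" for v
  proof -
    have "v \<in> PiE S (\<lambda>j. {u j, l j})" "v \<noteq> u"
      using that by (auto simp: group_choices_def)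
    then have "f_set C S u l v \<subseteq> cached_points C (S, u)"
      by (rule f_set_subset_cached_points[OF u])
    then have "?y v \<in> cached_points C (S, u)"
      using y_in_f_set by (rule subsetD)
    with that show ?thesis
      by (intro cache) auto
  qed
  then show ?thesis
    using sent unfolding transmission_def
    by (rule sum_eq_sum_imp_summand_eq[OF finite_group_choices[OF \<open>finite S\<close>]
          self_in_group_choices[OF group], rotated])
qed

lemma uncached_point_decodes:
  fixes W W' :: "nat \<Rightarrow> 'a \<Rightarrow> 'v::ab_group_add"
  assumes design: "resolvable_design X C k r br" and mu: "mu_z_eq C r br z mu"
    and ord: "\<And>A. finite A \<Longrightarrow> distinct (ord A) \<and> set (ord A) = A"
    and user: "(S, u) \<in> users r br z" and "x \<in> X" "x \<notin> cached_points C (S, u)"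
    and sent: "\<forall>(S, a, b)\<in>groups r br z. \<forall>s<mu.
                 transmission C ord d W S a b s = transmission C ord d W' S a b s"
    and cache: "\<And>v y. (S, v) \<in> users r br z \<Longrightarrow> y \<in> cached_points C (S, u) \<Longrightarrow>
                  W (d (S, v)) y = W' (d (S, v)) y"
  shows "W (d (S, u)) x = W' (d (S, u)) x"
proof -
  obtain l where group: "(S, u, l) \<in> groups r br z" and "x \<in> f_set C S u l u"
    using complementary_group_exists[OF design user \<open>x \<in> X\<close> \<open>x \<notin> cached_points C (S, u)\<close>] .
  then have "x \<in> set (ord (f_set C S u l u))"
    using set_ord_f_set(1)[OF mu group ord] by simp
  then obtain s where s: "s < mu" "ord (f_set C S u l u) ! s = x"
    using set_ord_f_set(2)[OF mu group ord] by (auto simp: in_set_conv_nth)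
  have "W (d (S, u)) (ord (f_set C S u l u) ! s) = W' (d (S, u)) (ord (f_set C S u l u) ! s)"
  proof (rule group_transmission_decodes[OF mu ord group s(1)])
    show "transmission C ord d W S u l s = transmission C ord d W' S u l s"
      using sent group s(1) by blast
    show "W (d (S, v)) y = W' (d (S, v)) y"
      if "v \<in> group_choices S u l" "y \<in> cached_points C (S, u)" for v y
      using that group_choices_users[OF group] by (intro cache)
  qed
  with s(2) show ?thesis by simp
qed

theorem lemma8:
  fixes X :: "'a set" and C :: "nat \<Rightarrow> nat \<Rightarrow> 'a set"
    and k r br z mu N :: nat
    and ord :: "'a set \<Rightarrow> 'a list"
    and d :: "nat set \<times> (nat \<Rightarrow> nat) \<Rightarrow> nat"
  assumes crd: "cross_resolvable_design X C k r br"
    and z: "2 \<le> z" "z \<le> r"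
    and mu: "mu_z_eq C r br z mu"
    and ord: "\<And>A. finite A \<Longrightarrow> distinct (ord A) \<and> set (ord A) = A"
    and demands: "d ` users r br z \<subseteq> {1..N}"
    and distinct_demands: "inj_on d (users r br z)"
    and xor: "\<And>x::'v::ab_group_add. x + x = 0"
  shows "\<forall>m\<in>users r br z. \<forall>(W::nat \<Rightarrow> 'a \<Rightarrow> 'v) W'.
           (\<forall>i\<in>{1..N}. \<forall>x\<in>cached_points C m. W i x = W' i x) \<and>
           (\<forall>(S, a, b)\<in>groups r br z. \<forall>s<mu.
              transmission C ord d W S a b s = transmission C ord d W' S a b s)
           \<longrightarrow> (\<forall>x\<in>X. W (d m) x = W' (d m) x)"
proof (intro ballI allI impI; elim conjE)
  fix m and W W' :: "nat \<Rightarrow> 'a \<Rightarrow> 'v" and x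
  assume m: "m \<in> users r br z" and "x \<in> X"
    and cache: "\<forall>i\<in>{1..N}. \<forall>x\<in>cached_points C m. W i x = W' i x"
    and sent: "\<forall>(S, a, b)\<in>groups r br z. \<forall>s<mu.
                 transmission C ord d W S a b s = transmission C ord d W' S a b s"
  obtain S u where Su: "m = (S, u)" by (cases m)
  have design: "resolvable_design X C k r br"
    using crd by (simp add: cross_resolvable_design_def)
  have "W (d (S, v)) y = W' (d (S, v)) y"
    if "(S, v) \<in> users r br z" "y \<in> cached_points C m" for v y
    using that cache demands by blast
  then show "W (d m) x = W' (d m) x"
    using uncached_point_decodes[OF design mu ord m[unfolded Su] \<open>x \<in> X\<close> _ sent]
      cache demands m Su by (cases "x \<in> cached_points C m") blast+
qed

end
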